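(* Let $p$ be a prime, $h_1,h_2$ relatively prime positive integers, and $F$ the 2-dimensional Lubin–Tate formal group over $\mathbb{Z}_p$ associated with $(h_1,h_2)$. For every integer $n\ge1$, the field $\mathbb{Q}_p(F[p^n])$ generated over $\mathbb{Q}_p$ by the coordinates of the $p^n$-torsion points of $F$ is a Galois extension of $\mathbb{Q}_p$.
   Context: With $h=h_1+h_2$, let $L=(L_1,L_2)$ with $L_1=x_1+\sum_{k\ge1}p^{-2k}x_1^{p^{kh}}+\sum_{k\ge0}p^{-(2k+1)}x_2^{p^{h_1+kh}}$, $L_2=x_2+\sum_{k\ge1}p^{-2k}x_2^{p^{kh}}+\sum_{k\ge0}p^{-(2k+1)}x_1^{p^{h_2+kh}}$, and $F(X,Y)=L^{-1}(L(X)+L(Y))$, a 2-dimensional formal group with coefficients in $\mathbb{Z}_p$. For $a\in\mathbb{Z}_p$, $[a]_F(X)=L^{-1}(aL(X))$, and $F[p^n]=\{X\in\overline{\mathbb{Q}}_p^{\,2}:[p^n]_F(X)=\vec0\}$. *)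

theory Defs
  imports Complex_Main "HOL-Computational_Algebra.Polynomial"
begin

type_synonym 'a ps2 = "nat \<times> nat \<Rightarrow> 'a"

definition ps_one :: "'a::comm_ring_1 ps2" where
  "ps_one = (\<lambda>(a,b). if a = 0 \<and> b = 0 then 1 else 0)"

definition ps_X1 :: "'a::comm_ring_1 ps2" where
  "ps_X1 = (\<lambda>(a,b). if a = 1 \<and> b = 0 then 1 else 0)"

definition ps_X2 :: "'a::comm_ring_1 ps2" where
  "ps_X2 = (\<lambda>(a,b). if a = 0 \<and> b = 1 then 1 else 0)"

definition ps_mult :: "'a::comm_ring_1 ps2 \<Rightarrow> 'a ps2 \<Rightarrow> 'a ps2" where
  "ps_mult f g = (\<lambda>(a,b). \<Sum>i\<le>a. \<Sum>j\<le>b. f (i,j) * g (a - i, b - j))"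

primrec ps_pow :: "'a::comm_ring_1 ps2 \<Rightarrow> nat \<Rightarrow> 'a ps2" where
  "ps_pow f 0 = ps_one"
| "ps_pow f (Suc n) = ps_mult f (ps_pow f n)"

text \<open>Substitution S(G1,G2) of a pair of series without constant term into S;
  only monomials of total degree at most a+b contribute to the coefficient at (a,b).\<close>
definition ps_comp :: "'a::comm_ring_1 ps2 \<Rightarrow> 'a ps2 \<times> 'a ps2 \<Rightarrow> 'a ps2" where
  "ps_comp S G = (\<lambda>(a,b). \<Sum>(i,j)\<in>{(i,j). i + j \<le> a + b}.
      S (i,j) * ps_mult (ps_pow (fst G) i) (ps_pow (snd G) j) (a,b))"

definition ps_comp2 :: "'a::comm_ring_1 ps2 \<times> 'a ps2 \<Rightarrow> 'a ps2 \<times> 'a ps2 \<Rightarrow> 'a ps2 \<times> 'a ps2" where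
  "ps_comp2 S G = (ps_comp (fst S) G, ps_comp (snd S) G)"

section \<open>The logarithm L of the 2-dimensional Lubin--Tate group attached to (h1,h2)\<close>

text \<open>Coefficients of
  L1 = x1 + sum_{k>=1} p^{-2k} x1^{p^{kh}} + sum_{k>=0} p^{-(2k+1)} x2^{p^{h1+kh}},  h = h1 + h2.\<close>
definition LT_L1 :: "nat \<Rightarrow> nat \<Rightarrow> nat \<Rightarrow> rat ps2" where
  "LT_L1 p h1 h2 = (\<lambda>(i,j).
      (if j = 0 then (if i = 1 then 1 else 0)
          + (\<Sum>k\<in>{k. 1 \<le> k \<and> p ^ (k * (h1 + h2)) = i}. 1 / of_nat p ^ (2 * k))
       else 0)
    + (if i = 0 then (\<Sum>k\<in>{k. p ^ (h1 + k * (h1 + h2)) = j}. 1 / of_nat p ^ (2 * k + 1))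
       else 0))"

text \<open>L2 = x2 + sum_{k>=1} p^{-2k} x2^{p^{kh}} + sum_{k>=0} p^{-(2k+1)} x1^{p^{h2+kh}}.\<close>
definition LT_L2 :: "nat \<Rightarrow> nat \<Rightarrow> nat \<Rightarrow> rat ps2" where
  "LT_L2 p h1 h2 = (\<lambda>(i,j). LT_L1 p h2 h1 (j,i))"

definition LT_L :: "nat \<Rightarrow> nat \<Rightarrow> nat \<Rightarrow> rat ps2 \<times> rat ps2" where
  "LT_L p h1 h2 = (LT_L1 p h1 h2, LT_L2 p h1 h2)"

definition LT_Linv :: "nat \<Rightarrow> nat \<Rightarrow> nat \<Rightarrow> rat ps2 \<times> rat ps2" where
  "LT_Linv p h1 h2 = (THE G. fst G (0,0) = 0 \<and> snd G (0,0) = 0 \<and>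
      ps_comp2 (LT_L p h1 h2) G = (ps_X1, ps_X2))"

definition LT_mult :: "nat \<Rightarrow> nat \<Rightarrow> nat \<Rightarrow> rat \<Rightarrow> rat ps2 \<times> rat ps2" where
  "LT_mult p h1 h2 a = ps_comp2 (LT_Linv p h1 h2)
      ((\<lambda>ij. a * fst (LT_L p h1 h2) ij), (\<lambda>ij. a * snd (LT_L p h1 h2) ij))"

definition av_has_sum :: "('a::field \<Rightarrow> real) \<Rightarrow> ('i \<Rightarrow> 'a) \<Rightarrow> 'a \<Rightarrow> bool" where
  "av_has_sum av f s \<longleftrightarrow> (\<forall>e>0. \<exists>S0. finite S0 \<and>
      (\<forall>S. finite S \<and> S0 \<subseteq> S \<longrightarrow> av (sum f S - s) < e))"

text \<open>The closure of Q in the valued field: this is Q_p.\<close>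
definition Qp_in :: "('a::field_char_0 \<Rightarrow> real) \<Rightarrow> 'a set" where
  "Qp_in av = {x. \<forall>e>0. \<exists>q::rat. av (x - of_rat q) < e}"

definition poly_over :: "'a::comm_ring_1 set \<Rightarrow> 'a poly \<Rightarrow> bool" where
  "poly_over E P \<longleftrightarrow> (\<forall>i. coeff P i \<in> E)"

text \<open>av makes 'a a non-archimedean valued field, with the p-adic absolute value on Q
  (|p| = 1/p), in which the closure of Q is complete (hence equals Q_p), which is
  algebraically closed and algebraic over that closure: i.e. 'a is an algebraic closure
  of Q_p with its (unique) extended absolute value.\<close>
definition is_Qp_bar :: "nat \<Rightarrow> ('a::field_char_0 \<Rightarrow> real) \<Rightarrow> bool" where
  "is_Qp_bar p av \<longleftrightarrow>
     (\<forall>x. av x \<ge> 0) \<and> (\<forall>x. av x = 0 \<longleftrightarrow> x = 0) \<and>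
     (\<forall>x y. av (x * y) = av x * av y) \<and>
     (\<forall>x y. av (x + y) \<le> max (av x) (av y)) \<and>
     av (of_nat p) = 1 / real p \<and>
     (\<forall>f::nat \<Rightarrow> rat. (\<forall>e>0. \<exists>N. \<forall>m\<ge>N. \<forall>k\<ge>N. av (of_rat (f m) - of_rat (f k)) < e) \<longrightarrow>
        (\<exists>x. \<forall>e>0. \<exists>N. \<forall>m\<ge>N. av (of_rat (f m) - x) < e)) \<and>
     (\<forall>P::'a poly. degree P > 0 \<longrightarrow> (\<exists>x. poly P x = 0)) \<and>
     (\<forall>x. \<exists>P. P \<noteq> 0 \<and> poly_over (Qp_in av) P \<and> poly P x = 0)"

definition av_eval :: "('a::field_char_0 \<Rightarrow> real) \<Rightarrow> rat ps2 \<Rightarrow> 'a \<times> 'a \<Rightarrow> 'a \<Rightarrow> bool" where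
  "av_eval av f X s \<longleftrightarrow> av_has_sum av (\<lambda>(i,j). of_rat (f (i,j)) * fst X ^ i * snd X ^ j) s"

text \<open>F[p^n]: points X (in the maximal ideal, where F is defined) with [p^n]_F(X) = 0.\<close>
definition LT_torsion :: "('a::field_char_0 \<Rightarrow> real) \<Rightarrow> nat \<Rightarrow> nat \<Rightarrow> nat \<Rightarrow> nat \<Rightarrow> ('a \<times> 'a) set" where
  "LT_torsion av p h1 h2 n = {X. av (fst X) < 1 \<and> av (snd X) < 1 \<and>
      av_eval av (fst (LT_mult p h1 h2 (of_nat (p ^ n)))) X 0 \<and>
      av_eval av (snd (LT_mult p h1 h2 (of_nat (p ^ n)))) X 0}"

definition is_subfield :: "'a::field set \<Rightarrow> bool" where
  "is_subfield K \<longleftrightarrow> 0 \<in> K \<and> 1 \<in> K \<and> (\<forall>x\<in>K. \<forall>y\<in>K. x + y \<in> K \<and> x * y \<in> K) \<and>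
     (\<forall>x\<in>K. - x \<in> K \<and> inverse x \<in> K)"

definition field_gen :: "'a::field set \<Rightarrow> 'a set \<Rightarrow> 'a set" where
  "field_gen E A = \<Inter>{K. is_subfield K \<and> E \<subseteq> K \<and> A \<subseteq> K}"

definition is_min_poly :: "'a::field set \<Rightarrow> 'a \<Rightarrow> 'a poly \<Rightarrow> bool" where
  "is_min_poly E x m \<longleftrightarrow> poly_over E m \<and> m \<noteq> 0 \<and> lead_coeff m = 1 \<and> poly m x = 0 \<and>
     (\<forall>P. poly_over E P \<and> P \<noteq> 0 \<and> poly P x = 0 \<longrightarrow> degree m \<le> degree P)"

text \<open>K/E (inside an algebraically closed field) is Galois: algebraic, normal (the minimal
  polynomial over E of each element of K splits into linear factors over K, i.e. all its roots
  lie in K) and separable (these minimal polynomials have no multiple roots).\<close>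
definition galois_ext :: "'a::field set \<Rightarrow> 'a set \<Rightarrow> bool" where
  "galois_ext E K \<longleftrightarrow> is_subfield E \<and> is_subfield K \<and> E \<subseteq> K \<and>
     (\<forall>x\<in>K. \<exists>m. is_min_poly E x m \<and> (\<forall>y. poly m y = 0 \<longrightarrow> y \<in> K \<and> order y m = 1))"

end

theory Submission
  imports Defs
begin

text \<open>
  Every element of the algebraic closure is algebraic over the complete field Qp, and an
  embedding \<tau> over Qp of a subfield preserves the absolute value: x and a conjugate y = \<tau> x have
  the same absolute value, because by equivalence of norms on Qp[x] the coefficients of x^n in
  the basis 1, x, ..., x^(d-1) are bounded by |x^n|, while the same coefficients express y^n.
  Hence \<tau> maps convergent series with rational coefficients to convergent series with the
  image sum, so it maps the p^n-torsion points of F, the common zeros in the open unit polydisc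
  of the two coordinate series of [p^n]_F, to torsion points. Extending embeddings one element
  at a time, every conjugate of an element of Qp(F[p^n]) is its image under such a \<tau>, so the
  extension is normal; it is separable in characteristic zero. Only the rationality of the
  coefficients of [p^n]_F is used.
\<close>

section \<open>Subfields and the fields they generate\<close>

locale subfield =
  fixes K :: "'a::field set"
  assumes subfield: "is_subfield K"
begin

lemma zero_mem [simp]: "0 \<in> K"
  and one_mem [simp]: "1 \<in> K"
  and add_mem: "x \<in> K \<Longrightarrow> y \<in> K \<Longrightarrow> x + y \<in> K"
  and mult_mem: "x \<in> K \<Longrightarrow> y \<in> K \<Longrightarrow> x * y \<in> K"
  and uminus_mem: "x \<in> K \<Longrightarrow> - x \<in> K"
  and inverse_mem: "x \<in> K \<Longrightarrow> inverse x \<in> K"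
  using subfield unfolding is_subfield_def by auto

lemma diff_mem: "x \<in> K \<Longrightarrow> y \<in> K \<Longrightarrow> x - y \<in> K"
  using add_mem uminus_mem by (metis diff_conv_add_uminus)

lemma divide_mem: "x \<in> K \<Longrightarrow> y \<in> K \<Longrightarrow> x / y \<in> K"
  using mult_mem inverse_mem by (metis divide_inverse)

lemma of_nat_mem: "of_nat n \<in> K"
  by (induction n) (auto intro: add_mem)

lemma power_mem: "x \<in> K \<Longrightarrow> x ^ n \<in> K"
  by (induction n) (auto intro: mult_mem)

lemma sum_mem: "(\<And>i. i \<in> I \<Longrightarrow> f i \<in> K) \<Longrightarrow> sum f I \<in> K"
  by (induction I rule: infinite_finite_induct) (auto intro: add_mem)

end

lemma subfield_field_gen: "subfield (field_gen E A)"
  unfolding subfield_def field_gen_def is_subfield_def by auto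

lemma field_gen_upper: "E \<subseteq> field_gen E A" "A \<subseteq> field_gen E A"
  unfolding field_gen_def by auto

lemma field_gen_least: "is_subfield K \<Longrightarrow> E \<subseteq> K \<Longrightarrow> A \<subseteq> K \<Longrightarrow> field_gen E A \<subseteq> K"
  unfolding field_gen_def by auto

lemma field_gen_mono: "A \<subseteq> B \<Longrightarrow> field_gen E A \<subseteq> field_gen E B"
  unfolding field_gen_def by auto

lemma field_gen_finite_subset:
  assumes "x \<in> field_gen E A"
  obtains F where "F \<subseteq> A" "finite F" "x \<in> field_gen E F"
proof -
  define U where "U = (\<Union>F\<in>{F. F \<subseteq> A \<and> finite F}. field_gen E F)"
  have U_iff: "w \<in> U \<longleftrightarrow> (\<exists>F\<subseteq>A. finite F \<and> w \<in> field_gen E F)" for w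
    unfolding U_def by blast
  have closed: "w \<in> U" if v: "v \<in> U" and v': "v' \<in> U"
    and op: "\<And>F. v \<in> field_gen E F \<Longrightarrow> v' \<in> field_gen E F \<Longrightarrow> w \<in> field_gen E F" for v v' w
  proof -
    obtain F F' where "F \<subseteq> A" "finite F" "v \<in> field_gen E F" "F' \<subseteq> A" "finite F'" "v' \<in> field_gen E F'"
      using v v' unfolding U_iff by blast
    moreover have "field_gen E F \<subseteq> field_gen E (F \<union> F')" "field_gen E F' \<subseteq> field_gen E (F \<union> F')"
      by (simp_all add: field_gen_mono)
    ultimately show ?thesis
      unfolding U_iff by (intro exI[of _ "F \<union> F'"]) (use op in blast)
  qed
  have "is_subfield U"
    unfolding is_subfield_def
  proof (intro conjI ballI)
    show "0 \<in> U" "1 \<in> U"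
      using subfield.zero_mem subfield.one_mem subfield_field_gen unfolding U_iff by blast+
  next
    fix v v' assume v: "v \<in> U" and v': "v' \<in> U"
    show "v + v' \<in> U" by (rule closed[OF v v']) (rule subfield.add_mem[OF subfield_field_gen])
    show "v * v' \<in> U" by (rule closed[OF v v']) (rule subfield.mult_mem[OF subfield_field_gen])
  next
    fix v assume v: "v \<in> U"
    show "- v \<in> U" by (rule closed[OF v v]) (rule subfield.uminus_mem[OF subfield_field_gen])
    show "inverse v \<in> U" by (rule closed[OF v v]) (rule subfield.inverse_mem[OF subfield_field_gen])
  qed
  moreover have "E \<subseteq> U" "A \<subseteq> U"
  proof -
    show "E \<subseteq> U"
      using field_gen_upper(1)[of E "{}"] unfolding U_def by blast
    show "A \<subseteq> U"
    proof
      fix a assume "a \<in> A"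
      then show "a \<in> U"
        using field_gen_upper(2)[of "{a}" E] unfolding U_iff by (intro exI[of _ "{a}"]) auto
    qed
  qed
  ultimately have "x \<in> U"
    using field_gen_least assms by blast
  then show ?thesis
    using that unfolding U_iff by blast
qed

lemma finite_subset_coords:
  assumes "finite F" "F \<subseteq> fst ` T \<union> snd ` T"
  obtains S where "S \<subseteq> T" "finite S" "F \<subseteq> fst ` S \<union> snd ` S"
proof -
  obtain S1 S2 where S12: "S1 \<subseteq> T" "finite S1" "F \<inter> fst ` T = fst ` S1"
    "S2 \<subseteq> T" "finite S2" "F \<inter> snd ` T = snd ` S2"
    using assms(1) finite_subset_image[of "F \<inter> fst ` T" fst T] finite_subset_image[of "F \<inter> snd ` T" snd T]
    by (metis finite_Int inf_le2)
  have "F \<subseteq> fst ` S1 \<union> snd ` S2"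
    using assms(2) S12(3,6) by blast
  then show ?thesis
    using S12(1,2,4,5) by (intro that[of "S1 \<union> S2"]) (auto simp: image_Un)
qed

section \<open>Polynomials over a subfield\<close>

definition algebraic_over :: "'a::field set \<Rightarrow> 'a \<Rightarrow> bool" where
  "algebraic_over K x \<longleftrightarrow> (\<exists>P. P \<noteq> 0 \<and> poly_over K P \<and> poly P x = 0)"

lemma poly_over_pCons: "poly_over K (pCons a P) \<longleftrightarrow> a \<in> K \<and> poly_over K P"
  unfolding poly_over_def by (auto simp: coeff_pCons split: nat.splits)

lemma poly_over_mono: "poly_over K P \<Longrightarrow> K \<subseteq> L \<Longrightarrow> poly_over L P"
  unfolding poly_over_def by auto

lemma poly_eq_sum_lessThan:
  fixes R :: "'a::comm_ring_1 poly"
  assumes "R = 0 \<or> degree R < d"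
  shows "poly R z = (\<Sum>i<d. coeff R i * z ^ i)"
proof (cases "R = 0")
  case False
  have "poly R z = (\<Sum>i\<le>degree R. coeff R i * z ^ i)"
    by (simp add: poly_altdef)
  also have "\<dots> = (\<Sum>i<d. coeff R i * z ^ i)"
    using assms False by (intro sum.mono_neutral_left) (auto simp: coeff_eq_0)
  finally show ?thesis .
qed simp

lemma is_min_poly_degree_pos:
  assumes m: "is_min_poly K x m"
  shows "0 < degree m"
proof (rule ccontr)
  assume "\<not> 0 < degree m"
  then have "m = [:lead_coeff m:]"
    by (simp add: degree_0_id)
  then have "m = 1"
    using m unfolding is_min_poly_def by (simp add: one_pCons)
  then show False
    using m unfolding is_min_poly_def by simp
qed

definition lin_indep_over :: "'a::field set \<Rightarrow> 'i set \<Rightarrow> ('i \<Rightarrow> 'a) \<Rightarrow> bool" where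
  "lin_indep_over K I v \<longleftrightarrow>
     (\<forall>a. (\<forall>i\<in>I. a i \<in> K) \<longrightarrow> (\<Sum>i\<in>I. a i * v i) = 0 \<longrightarrow> (\<forall>i\<in>I. a i = 0))"

context subfield
begin

lemma poly_over_0 [simp]: "poly_over K 0"
  and poly_over_1 [simp]: "poly_over K 1"
  and poly_over_const: "a \<in> K \<Longrightarrow> poly_over K [:a:]"
  and poly_over_monom: "a \<in> K \<Longrightarrow> poly_over K (monom a n)"
  by (auto simp: poly_over_def coeff_monom coeff_pCons one_pCons split: nat.splits)

lemma poly_over_X [simp]: "poly_over K [:0, 1:]"
  by (simp add: poly_over_pCons)

lemma poly_over_add: "poly_over K P \<Longrightarrow> poly_over K Q \<Longrightarrow> poly_over K (P + Q)"
  and poly_over_uminus: "poly_over K P \<Longrightarrow> poly_over K (- P)"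
  and poly_over_diff: "poly_over K P \<Longrightarrow> poly_over K Q \<Longrightarrow> poly_over K (P - Q)"
  and poly_over_smult: "a \<in> K \<Longrightarrow> poly_over K P \<Longrightarrow> poly_over K (smult a P)"
  by (auto simp: poly_over_def intro: add_mem uminus_mem diff_mem mult_mem)

lemma poly_over_mult: "poly_over K P \<Longrightarrow> poly_over K Q \<Longrightarrow> poly_over K (P * Q)"
  unfolding poly_over_def
  by (intro allI coeff_mult_semiring_closed) (auto intro: add_mem mult_mem)

lemma poly_over_pcompose: "poly_over K P \<Longrightarrow> poly_over K Q \<Longrightarrow> poly_over K (pcompose P Q)"
  unfolding poly_over_def
  by (intro allI coeff_pcompose_semiring_closed) (auto intro: add_mem mult_mem)

lemma poly_over_pderiv: "poly_over K P \<Longrightarrow> poly_over K (pderiv P)"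
  unfolding poly_over_def by (simp add: coeff_pderiv mult_mem of_nat_mem del: of_nat_Suc)

lemma poly_mem: "poly_over K P \<Longrightarrow> x \<in> K \<Longrightarrow> poly P x \<in> K"
  by (induction P) (auto simp: poly_over_pCons intro: add_mem mult_mem)

text \<open>The library's division of polynomials says nothing about coefficients in K, so
  division with remainder by a monic polynomial is redone inside K.\<close>
lemma poly_over_div_monic:
  assumes q: "poly_over K q" "lead_coeff q = 1" and D: "poly_over K D"
  obtains Q R where "poly_over K Q" "poly_over K R" "D = q * Q + R" "R = 0 \<or> degree R < degree q"
  using D
proof (induction "degree D" arbitrary: D thesis rule: less_induct)
  case less
  show ?case
  proof (cases "D = 0 \<or> degree D < degree q")
    case True
    then show ?thesis using less.prems by (intro less.prems(1)[of 0 D]) auto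
  next
    case False
    define c where "c = lead_coeff D"
    define M where "M = smult c (monom 1 (degree D - degree q))"
    have M: "poly_over K M"
      using less.prems(2) unfolding M_def c_def poly_over_def by (auto intro: mult_mem simp: coeff_monom)
    have "\<forall>k\<ge>degree D. coeff (D - q * M) k = 0"
    proof -
      have "coeff (q * M) k = (if k = degree D then c else 0)" if "k \<ge> degree D" for k
        using False that q(2) coeff_eq_0[of q "k - (degree D - degree q)"]
        by (auto simp: M_def mult.commute[of q] coeff_monom_mult)
      then show ?thesis
        using coeff_eq_0[of D] by (auto simp: c_def)
    qed
    then have "D - q * M = 0 \<or> degree (D - q * M) < degree D"
      by (metis degree_lessI)
    moreover have "poly_over K (D - q * M)"
      by (intro poly_over_diff poly_over_mult less.prems(2) q(1) M)
    ultimately obtain Q R where "poly_over K Q" "poly_over K R" "D - q * M = q * Q + R"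
      "R = 0 \<or> degree R < degree q"
      using less.hyps by (metis add_0 mult_zero_right poly_over_0)
    then show ?thesis
      by (intro less.prems(1)[of "Q + M" R]) (auto simp: poly_over_add M algebra_simps)
  qed
qed

lemma is_min_poly_exists:
  assumes "algebraic_over K x"
  obtains m where "is_min_poly K x m"
proof -
  let ?deg = "\<lambda>n. \<exists>P. P \<noteq> 0 \<and> poly_over K P \<and> poly P x = 0 \<and> degree P = n"
  obtain P where P: "P \<noteq> 0" "poly_over K P" "poly P x = 0" "degree P = Least ?deg"
    using LeastI_ex[of ?deg] assms unfolding algebraic_over_def by blast
  have "degree P \<le> degree R" if "R \<noteq> 0" "poly_over K R" "poly R x = 0" for R
    unfolding P(4) by (rule Least_le) (use that in blast)
  moreover have "poly_over K (smult (inverse (lead_coeff P)) P)"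
    using P(2) by (intro poly_over_smult inverse_mem) (auto simp: poly_over_def)
  ultimately have "is_min_poly K x (smult (inverse (lead_coeff P)) P)"
    using P(1-3) unfolding is_min_poly_def by simp
  then show ?thesis by (rule that)
qed

lemma is_min_poly_dvd:
  assumes m: "is_min_poly K x m" and D: "poly_over K D" "poly D x = 0"
  obtains Q where "poly_over K Q" "D = m * Q"
proof -
  have mK: "poly_over K m" "lead_coeff m = 1"
    using m unfolding is_min_poly_def by auto
  obtain Q R where QR: "poly_over K Q" "poly_over K R" "D = m * Q + R" "R = 0 \<or> degree R < degree m"
    using poly_over_div_monic[OF mK D(1)] .
  have "poly R x = 0"
    using D(2) QR(3) m unfolding is_min_poly_def by simp
  then have "R = 0"
    using QR m unfolding is_min_poly_def by (meson not_le)
  then show ?thesis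
    using QR that by simp
qed

lemma power_eq_lower_powers:
  assumes m: "is_min_poly K x m"
  obtains r where "\<And>i. r i \<in> K" "\<And>z. poly m z = 0 \<Longrightarrow> z ^ n = (\<Sum>i<degree m. r i * z ^ i)"
proof -
  have mK: "poly_over K m" "lead_coeff m = 1"
    using m unfolding is_min_poly_def by auto
  obtain Q R where QR: "poly_over K R" "monom 1 n = m * Q + R" "R = 0 \<or> degree R < degree m"
    using poly_over_div_monic[OF mK poly_over_monom[OF one_mem]] by metis
  have "z ^ n = (\<Sum>i<degree m. coeff R i * z ^ i)" if "poly m z = 0" for z
    using arg_cong[OF QR(2), of "\<lambda>P. poly P z"] that poly_eq_sum_lessThan[OF QR(3)]
    by (simp add: poly_monom)
  then show ?thesis
    using that[of "coeff R"] QR(1) unfolding poly_over_def by blast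
qed

lemma is_min_poly_root:
  assumes m: "is_min_poly K x m" and y: "poly m y = 0" and alg: "algebraic_over K y"
  shows "is_min_poly K y m"
proof -
  obtain my where my: "is_min_poly K y my"
    using is_min_poly_exists[OF alg] .
  have mK: "poly_over K m" "m \<noteq> 0"
    using m unfolding is_min_poly_def by auto
  obtain Q where Q: "poly_over K Q" "m = my * Q"
    using is_min_poly_dvd[OF my mK(1) y] .
  have "poly my x = 0"
  proof (rule ccontr)
    assume "poly my x \<noteq> 0"
    then have "degree m \<le> degree Q"
      using m Q unfolding is_min_poly_def by auto
    moreover have "degree m = degree my + degree Q"
      using Q mK(2) by (simp add: degree_mult_eq)
    ultimately show False
      using is_min_poly_degree_pos[OF my] by simp
  qed
  then have "degree m \<le> degree my"
    using m my unfolding is_min_poly_def by auto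
  then show ?thesis
    using my m y unfolding is_min_poly_def by (meson order_trans)
qed

lemma lin_indep_over_subset:
  assumes "finite I" "J \<subseteq> I" and indep: "lin_indep_over K I v"
  shows "lin_indep_over K J v"
  unfolding lin_indep_over_def
proof (intro allI impI ballI)
  fix a i assume a: "\<forall>i\<in>J. a i \<in> K" "(\<Sum>i\<in>J. a i * v i) = 0" and i: "i \<in> J"
  define a' where "a' i = (if i \<in> J then a i else 0)" for i
  have "(\<Sum>i\<in>I. a' i * v i) = (\<Sum>i\<in>J. a' i * v i)"
    using assms(1,2) by (intro sum.mono_neutral_right) (simp_all add: a'_def)
  also have "\<dots> = 0"
    using a(2) by (simp add: a'_def)
  finally have "(\<Sum>i\<in>I. a' i * v i) = 0" .
  moreover have "\<forall>i\<in>I. a' i \<in> K"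
    using a(1) by (simp add: a'_def)
  ultimately have "\<forall>i\<in>I. a' i = 0"
    using indep unfolding lin_indep_over_def by blast
  then show "a i = 0"
    using i assms(2) unfolding a'_def by (metis subsetD)
qed

lemma lin_indep_over_powers:
  assumes m: "is_min_poly K x m"
  shows "lin_indep_over K {..<degree m} (\<lambda>i. x ^ i)"
  unfolding lin_indep_over_def
proof (intro allI impI ballI)
  fix a k assume a: "\<forall>i\<in>{..<degree m}. a i \<in> K" "(\<Sum>i\<in>{..<degree m}. a i * x ^ i) = 0"
    and k: "k \<in> {..<degree m}"
  define P where "P = (\<Sum>i<degree m. monom (a i) i)"
  have coeff_P: "coeff P i = (if i < degree m then a i else 0)" for i
    unfolding P_def by (simp add: coeff_sum coeff_monom)
  have "poly_over K P"
    using a(1) unfolding poly_over_def coeff_P by auto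
  moreover have "poly P x = 0"
    using a(2) unfolding P_def by (simp add: poly_sum poly_monom)
  moreover have "degree P < degree m"
    using is_min_poly_degree_pos[OF m] by (intro degree_lessI) (auto simp: coeff_P)
  ultimately have "P = 0"
    using m unfolding is_min_poly_def by (meson not_le)
  then show "a k = 0"
    using coeff_P[of k] k by simp
qed

end

text \<open>The derivative is a nonzero polynomial over K of smaller degree (here the characteristic
  zero is used), hence does not vanish at y.\<close>
lemma is_min_poly_order_eq_1:
  fixes m :: "'a::field_char_0 poly"
  assumes K: "subfield K" and m: "is_min_poly K y m"
  shows "order y m = 1"
proof -
  have m0: "m \<noteq> 0" "poly m y = 0" "poly_over K m"
    using m unfolding is_min_poly_def by auto
  have d: "0 < degree m"
    using is_min_poly_degree_pos[OF m] .
  have "poly (pderiv m) y \<noteq> 0"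
  proof
    assume "poly (pderiv m) y = 0"
    moreover have "pderiv m \<noteq> 0"
      using d by (simp add: pderiv_eq_0_iff)
    ultimately have "degree m \<le> degree (pderiv m)"
      using m subfield.poly_over_pderiv[OF K m0(3)] unfolding is_min_poly_def by auto
    then show False
      using d by (simp add: degree_pderiv)
  qed
  then show ?thesis
    using order_pderiv[OF m0(1,2)] by (simp add: order_root)
qed

section \<open>Extending embeddings\<close>

locale subfield_hom = subfield M for M :: "'a::field set" +
  fixes \<tau> :: "'a \<Rightarrow> 'a"
  assumes hom_add: "a \<in> M \<Longrightarrow> b \<in> M \<Longrightarrow> \<tau> (a + b) = \<tau> a + \<tau> b"
    and hom_mult: "a \<in> M \<Longrightarrow> b \<in> M \<Longrightarrow> \<tau> (a * b) = \<tau> a * \<tau> b"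
    and hom_one [simp]: "\<tau> 1 = 1"
begin

lemma hom_zero [simp]: "\<tau> 0 = 0"
  using hom_add[of 0 0] by (metis add.right_neutral add_left_cancel zero_mem)

lemma hom_uminus: "a \<in> M \<Longrightarrow> \<tau> (- a) = - \<tau> a"
proof -
  assume "a \<in> M"
  then have "\<tau> a + \<tau> (- a) = 0"
    using hom_add[of a "- a"] uminus_mem[of a] by simp
  then show ?thesis
    by (metis add.commute add_eq_0_iff2)
qed

lemma hom_diff: "a \<in> M \<Longrightarrow> b \<in> M \<Longrightarrow> \<tau> (a - b) = \<tau> a - \<tau> b"
  using hom_add[of a "- b"] hom_uminus[of b] uminus_mem[of b] by simp

lemma hom_inverse: "a \<in> M \<Longrightarrow> \<tau> (inverse a) = inverse (\<tau> a)"
  using hom_mult[of a "inverse a"] inverse_mem[of a]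
  by (cases "a = 0") (auto intro: inverse_unique[symmetric])

lemma hom_power: "a \<in> M \<Longrightarrow> \<tau> (a ^ n) = \<tau> a ^ n"
  by (induction n) (auto simp: hom_mult power_mem)

lemma hom_sum: "(\<And>i. i \<in> I \<Longrightarrow> f i \<in> M) \<Longrightarrow> \<tau> (sum f I) = (\<Sum>i\<in>I. \<tau> (f i))"
  by (induction I rule: infinite_finite_induct) (auto simp: hom_add sum_mem)

lemma hom_poly: "poly_over M P \<Longrightarrow> w \<in> M \<Longrightarrow> \<tau> (poly P w) = poly (map_poly \<tau> P) (\<tau> w)"
  by (induction P) (auto simp: poly_over_pCons map_poly_pCons hom_add hom_mult poly_mem mult_mem)

lemma map_poly_hom_add:
  "poly_over M P \<Longrightarrow> poly_over M Q \<Longrightarrow> map_poly \<tau> (P + Q) = map_poly \<tau> P + map_poly \<tau> Q"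
  by (rule poly_eqI) (simp add: coeff_map_poly hom_add poly_over_def)

lemma map_poly_hom_diff:
  "poly_over M P \<Longrightarrow> poly_over M Q \<Longrightarrow> map_poly \<tau> (P - Q) = map_poly \<tau> P - map_poly \<tau> Q"
  by (rule poly_eqI) (simp add: coeff_map_poly hom_diff poly_over_def)

lemma map_poly_hom_mult:
  "poly_over M P \<Longrightarrow> poly_over M Q \<Longrightarrow> map_poly \<tau> (P * Q) = map_poly \<tau> P * map_poly \<tau> Q"
  by (rule poly_eqI) (simp add: coeff_map_poly coeff_mult hom_sum hom_mult mult_mem poly_over_def)

lemma subfield_preimage:
  assumes "is_subfield K"
  shows "is_subfield {w \<in> M. \<tau> w \<in> K}"
  using assms unfolding is_subfield_def
  by (auto simp: add_mem mult_mem uminus_mem inverse_mem hom_add hom_mult hom_uminus hom_inverse)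

end

definition adjoin :: "'a::field set \<Rightarrow> 'a \<Rightarrow> 'a set" where
  "adjoin M t = (\<lambda>P. poly P t) ` {P. poly_over M P}"

context subfield
begin

lemma adjoin_poly [intro]: "poly_over K P \<Longrightarrow> poly P t \<in> adjoin K t"
  unfolding adjoin_def by blast

lemma adjoinE:
  assumes "w \<in> adjoin K t"
  obtains P where "poly_over K P" "w = poly P t"
  using assms unfolding adjoin_def by blast

lemma adjoin_superset: "K \<subseteq> adjoin K t"
  using adjoin_poly[OF poly_over_const, of _ t] by auto

lemma adjoin_generator: "t \<in> adjoin K t"
  using adjoin_poly[OF poly_over_X, of t] by simp

text \<open>If c = c0 + X c' is the minimal polynomial of w \<noteq> 0, then c0 \<noteq> 0 by minimality and
  w c'(w) = - c0, so 1/w = - c'(w)/c0 is again a polynomial in t.\<close>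
lemma adjoin_inverse:
  assumes w: "w \<in> adjoin K t" and alg: "algebraic_over K w"
  shows "inverse w \<in> adjoin K t"
proof (cases "w = 0")
  case False
  obtain P where P: "poly_over K P" "w = poly P t"
    using w by (rule adjoinE)
  obtain c where c: "is_min_poly K w c"
    using is_min_poly_exists[OF alg] .
  obtain c0 c' where cc: "c = pCons c0 c'"
    by (cases c)
  have cK: "c0 \<in> K" "poly_over K c'"
    using c cc unfolding is_min_poly_def by (auto simp: poly_over_pCons)
  have pc: "c0 + w * poly c' w = 0"
    using c cc unfolding is_min_poly_def by simp
  have "c0 \<noteq> 0"
  proof
    assume "c0 = 0"
    then have "poly c' w = 0" "c' \<noteq> 0"
      using pc False c cc unfolding is_min_poly_def by auto
    then have "degree c \<le> degree c'"
      using c cK unfolding is_min_poly_def by auto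
    then show False
      using cc \<open>c' \<noteq> 0\<close> by simp
  qed
  then have "inverse w = poly (smult (- inverse c0) (pcompose c' P)) t"
    using pc False P(2) by (simp add: poly_pcompose field_simps eq_neg_iff_add_eq_0)
  moreover have "poly_over K (smult (- inverse c0) (pcompose c' P))"
    using P(1) cK by (intro poly_over_smult poly_over_pcompose uminus_mem inverse_mem)
  ultimately show ?thesis
    by (metis adjoin_poly)
qed (use adjoin_superset[of t] in auto)

lemma subfield_adjoin:
  assumes alg: "\<And>w. w \<in> adjoin K t \<Longrightarrow> algebraic_over K w"
  shows "is_subfield (adjoin K t)"
  unfolding is_subfield_def
proof (intro conjI ballI)
  show "0 \<in> adjoin K t" "1 \<in> adjoin K t"
    using adjoin_superset[of t] by auto
next
  fix x y assume "x \<in> adjoin K t" "y \<in> adjoin K t"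
  then obtain P Q where "poly_over K P" "x = poly P t" "poly_over K Q" "y = poly Q t"
    by (metis adjoinE)
  then show "x + y \<in> adjoin K t" "x * y \<in> adjoin K t" "- x \<in> adjoin K t"
    by (metis adjoin_poly poly_add poly_mult poly_minus poly_over_add poly_over_mult poly_over_uminus)+
next
  fix x assume "x \<in> adjoin K t"
  then show "inverse x \<in> adjoin K t"
    using adjoin_inverse alg by blast
qed

end

lemma (in subfield_hom) poly_map_poly_eq_if_poly_eq:
  assumes q: "is_min_poly M t q" and s: "poly (map_poly \<tau> q) s = 0"
    and P: "poly_over M P" and R: "poly_over M R" "poly R t = poly P t"
  shows "poly (map_poly \<tau> R) s = poly (map_poly \<tau> P) s"
proof -
  obtain Q where Q: "poly_over M Q" "R - P = q * Q"
    using is_min_poly_dvd[OF q poly_over_diff[OF R(1) P]] R(2) by auto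
  have "map_poly \<tau> R - map_poly \<tau> P = map_poly \<tau> q * map_poly \<tau> Q"
    using Q R(1) P q unfolding is_min_poly_def by (metis map_poly_hom_diff map_poly_hom_mult)
  then show ?thesis
    using s by (metis eq_iff_diff_eq_0 mult_zero_left poly_diff poly_mult)
qed

text \<open>The extension sends P(t) to (\<tau> P)(s), which is well defined by
  poly_map_poly_eq_if_poly_eq.\<close>
lemma (in subfield_hom) extend_to_adjoin:
  assumes alg: "\<And>w. w \<in> adjoin M t \<Longrightarrow> algebraic_over M w"
    and q: "is_min_poly M t q" and s: "poly (map_poly \<tau> q) s = 0"
  obtains \<tau>' where "subfield_hom (adjoin M t) \<tau>'" "\<And>a. a \<in> M \<Longrightarrow> \<tau>' a = \<tau> a" "\<tau>' t = s"
proof -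
  define \<tau>' where "\<tau>' w = poly (map_poly \<tau> (SOME P. poly_over M P \<and> poly P t = w)) s" for w
  have \<tau>'_poly: "\<tau>' (poly P t) = poly (map_poly \<tau> P) s" if P: "poly_over M P" for P
  proof -
    have "\<exists>R. poly_over M R \<and> poly R t = poly P t"
      using P by blast
    then show ?thesis
      unfolding \<tau>'_def by (rule someI2_ex) (use poly_map_poly_eq_if_poly_eq[OF q s P] in blast)
  qed
  interpret M': subfield "adjoin M t"
    using subfield_adjoin[OF alg] by unfold_locales
  have "subfield_hom (adjoin M t) \<tau>'"
  proof
    fix x y assume "x \<in> adjoin M t" "y \<in> adjoin M t"
    then obtain P Q where PQ: "poly_over M P" "x = poly P t" "poly_over M Q" "y = poly Q t"
      by (metis adjoinE)
    show "\<tau>' (x + y) = \<tau>' x + \<tau>' y"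
      using PQ \<tau>'_poly[of "P + Q"] by (simp add: \<tau>'_poly map_poly_hom_add poly_over_add)
    show "\<tau>' (x * y) = \<tau>' x * \<tau>' y"
      using PQ \<tau>'_poly[of "P * Q"] by (simp add: \<tau>'_poly map_poly_hom_mult poly_over_mult)
  next
    show "\<tau>' 1 = 1"
      using \<tau>'_poly[OF poly_over_1] by simp
  qed
  moreover have "\<tau>' a = \<tau> a" if "a \<in> M" for a
    using \<tau>'_poly[OF poly_over_const[OF that]] by (simp add: map_poly_pCons)
  moreover have "\<tau>' t = s"
    using \<tau>'_poly[OF poly_over_X] by (simp add: map_poly_pCons)
  ultimately show ?thesis
    using that by blast
qed

definition embedding_over :: "'a::field set \<Rightarrow> 'a set \<Rightarrow> ('a \<Rightarrow> 'a) \<Rightarrow> bool" where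
  "embedding_over E M \<tau> \<longleftrightarrow> subfield_hom M \<tau> \<and> E \<subseteq> M \<and> (\<forall>e\<in>E. \<tau> e = e)"

lemma embedding_over_root:
  assumes \<tau>: "embedding_over E M \<tau>" and m: "poly_over E m" "poly m w = 0" and w: "w \<in> M"
  shows "poly m (\<tau> w) = 0"
proof -
  interpret subfield_hom M \<tau>
    using \<tau> unfolding embedding_over_def by blast
  have "map_poly \<tau> m = m"
    using \<tau> m(1) unfolding embedding_over_def poly_over_def by (intro poly_eqI) (simp add: coeff_map_poly)
  then show ?thesis
    using hom_poly[OF poly_over_mono[OF m(1)] w] m(2) \<tau> unfolding embedding_over_def by simp
qed

locale alg_closure = subfield E for E :: "'a::field set" +
  assumes algebraic: "algebraic_over E x"
    and alg_closed: "0 < degree (P :: 'a poly) \<Longrightarrow> \<exists>x. poly P x = 0"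
begin

lemma algebraic_over_superset: "E \<subseteq> M \<Longrightarrow> algebraic_over M x"
  using algebraic[of x] poly_over_mono unfolding algebraic_over_def by blast

lemma embedding_extend:
  assumes \<tau>: "embedding_over E M \<tau>" and q: "is_min_poly M t q" and s: "poly (map_poly \<tau> q) s = 0"
  obtains \<tau>' where "embedding_over E (adjoin M t) \<tau>'" "\<And>a. a \<in> M \<Longrightarrow> \<tau>' a = \<tau> a" "\<tau>' t = s"
proof -
  interpret subfield_hom M \<tau>
    using \<tau> unfolding embedding_over_def by blast
  have EM: "E \<subseteq> M"
    using \<tau> unfolding embedding_over_def by blast
  obtain \<tau>' where \<tau>': "subfield_hom (adjoin M t) \<tau>'" "\<And>a. a \<in> M \<Longrightarrow> \<tau>' a = \<tau> a" "\<tau>' t = s"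
    using extend_to_adjoin[OF algebraic_over_superset[OF EM] q s] by blast
  then have "embedding_over E (adjoin M t) \<tau>'"
    using \<tau> adjoin_superset unfolding embedding_over_def by auto
  then show ?thesis
    using that \<tau>' by blast
qed

lemma embedding_extend_any:
  assumes \<tau>: "embedding_over E M \<tau>"
  obtains M' \<tau>' where "embedding_over E M' \<tau>'" "M \<subseteq> M'" "t \<in> M'" "\<And>a. a \<in> M \<Longrightarrow> \<tau>' a = \<tau> a"
proof -
  interpret subfield_hom M \<tau>
    using \<tau> unfolding embedding_over_def by blast
  have EM: "E \<subseteq> M"
    using \<tau> unfolding embedding_over_def by blast
  obtain q where q: "is_min_poly M t q"
    using is_min_poly_exists[OF algebraic_over_superset[OF EM]] .
  have "coeff (map_poly \<tau> q) (degree q) = 1"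
    using q unfolding is_min_poly_def by (simp add: coeff_map_poly)
  then have deg: "0 < degree (map_poly \<tau> q)"
    using is_min_poly_degree_pos[OF q] by (metis le_degree less_le_trans zero_neq_one)
  obtain s where "poly (map_poly \<tau> q) s = 0"
    using alg_closed[OF deg] by blast
  then obtain \<tau>' where "embedding_over E (adjoin M t) \<tau>'" "\<And>a. a \<in> M \<Longrightarrow> \<tau>' a = \<tau> a"
    using embedding_extend[OF \<tau> q] by blast
  then show ?thesis
    using that[of "adjoin M t" \<tau>'] adjoin_superset adjoin_generator by blast
qed

lemma embedding_exists:
  assumes m: "is_min_poly E x m" and y: "poly m y = 0" and S: "finite S"
  obtains M \<tau> where "embedding_over E M \<tau>" "x \<in> M" "S \<subseteq> M" "\<tau> x = y"
  using S that
proof (induction S arbitrary: thesis rule: finite_induct)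
  case empty
  have "embedding_over E E id"
    unfolding embedding_over_def by (simp add: subfield_hom_def subfield_hom_axioms_def subfield_axioms)
  moreover have "poly (map_poly id m) y = 0"
    using y by simp
  ultimately obtain \<tau> where "embedding_over E (adjoin E x) \<tau>" "\<tau> x = y"
    using embedding_extend[OF _ m] by blast
  then show ?case
    using empty.prems[of "adjoin E x" \<tau>] adjoin_generator by blast
next
  case (insert t S)
  obtain M \<tau> where \<tau>: "embedding_over E M \<tau>" "x \<in> M" "S \<subseteq> M" "\<tau> x = y"
    using insert.IH by blast
  obtain M' \<tau>' where "embedding_over E M' \<tau>'" "M \<subseteq> M'" "t \<in> M'" "\<And>a. a \<in> M \<Longrightarrow> \<tau>' a = \<tau> a"
    using embedding_extend_any[OF \<tau>(1), of t] by blast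
  then show ?case
    using \<tau> by (intro insert.prems[of M' \<tau>']) auto
qed

text \<open>A conjugate y of x is \<tau> x for an embedding \<tau> defined on x and on the coordinates of
  finitely many points of T generating x; the elements that \<tau> sends into the field generated by T
  form a subfield containing these coordinates, hence x.\<close>
lemma field_gen_pairs_conjugate:
  fixes T :: "('a \<times> 'a) set"
  assumes stable: "\<And>M \<tau> a b. embedding_over E M \<tau> \<Longrightarrow> (a, b) \<in> T \<Longrightarrow> a \<in> M \<Longrightarrow> b \<in> M \<Longrightarrow>
      (\<tau> a, \<tau> b) \<in> T"
    and x: "x \<in> field_gen E (fst ` T \<union> snd ` T)"
    and m: "is_min_poly E x m" and y: "poly m y = 0"
  shows "y \<in> field_gen E (fst ` T \<union> snd ` T)"
proof -
  let ?coords = "\<lambda>S. fst ` S \<union> snd ` S"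
  define K where "K = field_gen E (?coords T)"
  obtain F where F: "F \<subseteq> ?coords T" "finite F" "x \<in> field_gen E F"
    using field_gen_finite_subset[OF x] .
  obtain S where S: "S \<subseteq> T" "finite S" "F \<subseteq> ?coords S"
    using finite_subset_coords[OF F(2,1)] .
  obtain M \<tau> where \<tau>: "embedding_over E M \<tau>" "x \<in> M" "?coords S \<subseteq> M" "\<tau> x = y"
    using embedding_exists[OF m y, of "?coords S"] S(2) by blast
  interpret subfield_hom M \<tau>
    using \<tau>(1) unfolding embedding_over_def by blast
  have K: "is_subfield K"
    unfolding K_def using subfield_field_gen unfolding subfield_def .
  have "?coords S \<subseteq> {w \<in> M. \<tau> w \<in> K}"
  proof
    fix w assume "w \<in> ?coords S"
    then obtain a b where ab: "(a, b) \<in> S" "w = a \<or> w = b"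
      by force
    then have "a \<in> M" "b \<in> M"
      using \<tau>(3) by force+
    then have "(\<tau> a, \<tau> b) \<in> T"
      using stable[OF \<tau>(1)] ab(1) S(1) by blast
    then have "\<tau> w \<in> ?coords T"
      using ab(2) by force
    then show "w \<in> {w \<in> M. \<tau> w \<in> K}"
      using ab \<open>a \<in> M\<close> \<open>b \<in> M\<close> field_gen_upper(2)[of "?coords T" E] unfolding K_def by blast
  qed
  moreover have "E \<subseteq> {w \<in> M. \<tau> w \<in> K}"
    using \<tau>(1) field_gen_upper(1)[of E "?coords T"] unfolding embedding_over_def K_def by auto
  ultimately have "field_gen E (?coords S) \<subseteq> {w \<in> M. \<tau> w \<in> K}"
    by (intro field_gen_least subfield_preimage K)
  moreover have "x \<in> field_gen E (?coords S)"
    using F(3) field_gen_mono[OF S(3)] by blast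
  ultimately show ?thesis
    using \<tau>(4) unfolding K_def by blast
qed

end

lemma galois_ext_field_gen_pairs:
  fixes E :: "'a::field_char_0 set" and T :: "('a \<times> 'a) set"
  assumes E: "alg_closure E"
    and stable: "\<And>M \<tau> a b. embedding_over E M \<tau> \<Longrightarrow> (a, b) \<in> T \<Longrightarrow> a \<in> M \<Longrightarrow> b \<in> M \<Longrightarrow>
      (\<tau> a, \<tau> b) \<in> T"
  shows "galois_ext E (field_gen E (fst ` T \<union> snd ` T))"
proof -
  interpret alg_closure E by (rule E)
  have "\<exists>m. is_min_poly E x m \<and> (\<forall>y. poly m y = 0 \<longrightarrow>
      y \<in> field_gen E (fst ` T \<union> snd ` T) \<and> order y m = 1)"
    if x: "x \<in> field_gen E (fst ` T \<union> snd ` T)" for x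
  proof -
    obtain m where m: "is_min_poly E x m"
      using is_min_poly_exists[OF algebraic] .
    moreover have "y \<in> field_gen E (fst ` T \<union> snd ` T)" "order y m = 1" if "poly m y = 0" for y
    proof -
      show "y \<in> field_gen E (fst ` T \<union> snd ` T)"
        by (rule field_gen_pairs_conjugate[OF _ x m that]) (rule stable)
      show "order y m = 1"
        using is_min_poly_order_eq_1[OF subfield_axioms is_min_poly_root[OF m that algebraic]] .
    qed
    ultimately show ?thesis
      by blast
  qed
  then show ?thesis
    unfolding galois_ext_def
    using subfield subfield_field_gen[unfolded subfield_def] field_gen_upper(1) by blast
qed

section \<open>The absolute value on the algebraic closure of Qp\<close>

locale Qp_bar =
  fixes p :: nat and av :: "'a::field_char_0 \<Rightarrow> real"
  assumes is_Qp_bar: "is_Qp_bar p av"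
begin

abbreviation Qp :: "'a set" where
  "Qp \<equiv> Qp_in av"

lemma av_nonneg: "0 \<le> av x"
  and av_eq_0_iff [simp]: "av x = 0 \<longleftrightarrow> x = 0"
  and av_mult: "av (x * y) = av x * av y"
  and av_add_le_max: "av (x + y) \<le> max (av x) (av y)"
  and av_cauchy_rat_converges: "\<And>f :: nat \<Rightarrow> rat.
    (\<forall>e>0. \<exists>N. \<forall>m\<ge>N. \<forall>k\<ge>N. av (of_rat (f m) - of_rat (f k)) < e) \<Longrightarrow>
    \<exists>x. \<forall>e>0. \<exists>N. \<forall>m\<ge>N. av (of_rat (f m) - x) < e"
  and algebraically_closed: "0 < degree (P :: 'a poly) \<Longrightarrow> \<exists>x. poly P x = 0"
  and algebraic_over_Qp: "algebraic_over Qp x"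
  using is_Qp_bar unfolding is_Qp_bar_def algebraic_over_def by blast+

lemma av_0 [simp]: "av 0 = 0"
  by simp

lemma av_pos_iff: "0 < av x \<longleftrightarrow> x \<noteq> 0"
  using av_nonneg[of x] av_eq_0_iff[of x] by linarith

lemma av_1 [simp]: "av 1 = 1"
  using av_mult[of 1 1] by simp

lemma av_uminus [simp]: "av (- x) = av x"
proof -
  have "av (- 1) * av (- 1) = 1"
    using av_mult[of "- 1" "- 1"] by simp
  then have "(av (- 1) - 1) * (av (- 1) + 1) = 0"
    by (simp add: algebra_simps)
  then have "av (- 1) = 1"
    using av_nonneg[of "- 1"] by simp
  then show ?thesis
    using av_mult[of "- 1" x] by simp
qed

lemma av_minus_commute: "av (x - y) = av (y - x)"
  using av_uminus[of "x - y"] by simp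

lemma av_inverse: "av (inverse x) = inverse (av x)"
  using av_mult[of x "inverse x"] by (cases "x = 0") (auto simp: inverse_unique)

lemma av_divide: "av (x / y) = av x / av y"
  by (simp add: divide_inverse av_mult av_inverse)

lemma av_power: "av (x ^ n) = av x ^ n"
  by (induction n) (auto simp: av_mult)

lemma av_add_less: "av x < B \<Longrightarrow> av y < B \<Longrightarrow> av (x + y) < B"
  using av_add_le_max[of x y] by simp

lemma av_diff_less: "av (x - y) < B \<Longrightarrow> av (y - z) < B \<Longrightarrow> av (x - z) < B"
  using av_add_less[of "x - y" B "y - z"] by simp

lemma av_add_le: "av x \<le> B \<Longrightarrow> av y \<le> B \<Longrightarrow> av (x + y) \<le> B"
  using av_add_le_max[of x y] by simp

lemma av_sum_le: "(\<And>i. i \<in> I \<Longrightarrow> av (f i) \<le> B) \<Longrightarrow> 0 \<le> B \<Longrightarrow> av (sum f I) \<le> B"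
  by (induction I rule: infinite_finite_induct) (simp_all add: av_add_le)

lemma av_sum_less: "finite I \<Longrightarrow> (\<And>i. i \<in> I \<Longrightarrow> av (f i) < e) \<Longrightarrow> 0 < e \<Longrightarrow> av (sum f I) < e"
  by (induction I rule: finite_induct) (auto intro!: av_add_less)

lemma av_eq_if_av_diff_less:
  assumes "av (x - y) < av x"
  shows "av y = av x"
proof (rule antisym)
  show "av y \<le> av x"
    using av_add_le_max[of x "y - x"] assms av_minus_commute[of x y] by simp
  show "av x \<le> av y"
    using av_add_le_max[of "x - y" y] assms by simp
qed

lemma Qp_iff: "x \<in> Qp \<longleftrightarrow> (\<forall>e>0. \<exists>q. av (x - of_rat q) < e)"
  unfolding Qp_in_def by simp

lemma of_rat_in_Qp [simp]: "of_rat q \<in> Qp"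
  unfolding Qp_iff by (intro allI impI exI[of _ q]) simp

lemma Qp_add: "x \<in> Qp \<Longrightarrow> y \<in> Qp \<Longrightarrow> x + y \<in> Qp"
  unfolding Qp_iff
proof (intro allI impI)
  fix e :: real
  assume "\<forall>e>0. \<exists>q. av (x - of_rat q) < e" "\<forall>e>0. \<exists>q. av (y - of_rat q) < e" "0 < e"
  then obtain q r where "av (x - of_rat q) < e" "av (y - of_rat r) < e"
    by blast
  then have "av ((x - of_rat q) + (y - of_rat r)) < e"
    by (rule av_add_less)
  then show "\<exists>q. av (x + y - of_rat q) < e"
    by (intro exI[of _ "q + r"]) (simp add: of_rat_add algebra_simps)
qed

lemma Qp_uminus: "x \<in> Qp \<Longrightarrow> - x \<in> Qp"
proof -
  have "- x - of_rat (- q) = - (x - of_rat q)" for q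
    by (simp add: of_rat_minus)
  then show "x \<in> Qp \<Longrightarrow> - x \<in> Qp"
    unfolding Qp_iff by (metis av_uminus)
qed

text \<open>x y - q r = x (y - r) + (x - q) r with |r| \<le> max |y| 1.\<close>
lemma Qp_mult:
  assumes x: "x \<in> Qp" and y: "y \<in> Qp"
  shows "x * y \<in> Qp"
  unfolding Qp_iff
proof (intro allI impI)
  fix e :: real assume "0 < e"
  define B where "B = max 1 (av y)"
  have B: "0 < B" "av y \<le> B"
    unfolding B_def by auto
  have "0 < min 1 (e / (av x + 1))" "0 < e / B"
    using \<open>0 < e\<close> B(1) av_nonneg[of x] by simp_all
  then obtain r q where r: "av (y - of_rat r) < min 1 (e / (av x + 1))"
    and q: "av (x - of_rat q) < e / B"
    using x y unfolding Qp_iff by blast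
  have "av (x * (y - of_rat r)) < e"
  proof -
    have "av (x * (y - of_rat r)) \<le> av x * (e / (av x + 1))"
      using r av_nonneg[of x] unfolding av_mult by (intro mult_left_mono) auto
    also have "\<dots> < e"
      using \<open>0 < e\<close> av_nonneg[of x] by (simp add: field_simps)
    finally show ?thesis .
  qed
  moreover have "av ((x - of_rat q) * of_rat r) < e"
  proof -
    have "av (of_rat r) \<le> B"
      using av_add_le_max[of y "of_rat r - y"] r av_minus_commute[of y] unfolding B_def by auto
    then have "av ((x - of_rat q) * of_rat r) \<le> av (x - of_rat q) * B"
      using av_nonneg unfolding av_mult by (intro mult_left_mono)
    also have "\<dots> < e / B * B"
      using q B(1) by (intro mult_strict_right_mono)
    also have "\<dots> = e"
      using B(1) by simp
    finally show ?thesis .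
  qed
  ultimately have "av (x * (y - of_rat r) + (x - of_rat q) * of_rat r) < e"
    by (intro av_add_less)
  then show "\<exists>q. av (x * y - of_rat q) < e"
    by (intro exI[of _ "q * r"]) (simp add: of_rat_mult algebra_simps)
qed

text \<open>Approximating x \<noteq> 0 by q with |x - q| < |x| forces |q| = |x|, and then
  |1/x - 1/q| = |x - q| / |x|^2.\<close>
lemma Qp_inverse:
  assumes x: "x \<in> Qp"
  shows "inverse x \<in> Qp"
proof (cases "x = 0")
  case False
  then have ax: "0 < av x"
    by (simp add: av_pos_iff)
  show ?thesis
    unfolding Qp_iff
  proof (intro allI impI)
    fix e :: real assume "0 < e"
    then have "0 < min (av x) (e * av x * av x)"
      using ax by simp
    then obtain q where q: "av (x - of_rat q) < min (av x) (e * av x * av x)"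
      using x unfolding Qp_iff by blast
    then have aq: "av (of_rat q) = av x"
      by (intro av_eq_if_av_diff_less) simp
    then have "(of_rat q :: 'a) \<noteq> 0"
      using ax by auto
    then have "inverse x - of_rat (inverse q) = (of_rat q - x) / (x * of_rat q)"
      using False by (simp only: of_rat_inverse) (simp add: field_simps)
    then have "av (inverse x - of_rat (inverse q)) = av (x - of_rat q) / (av x * av x)"
      using aq by (simp add: av_divide av_mult av_minus_commute)
    also have "\<dots> < e"
      using q ax by (simp add: field_simps)
    finally show "\<exists>q. av (inverse x - of_rat q) < e"
      by blast
  qed
qed (use of_rat_in_Qp[of 0] in simp)

lemma subfield_Qp: "subfield Qp"
proof -
  have "0 \<in> Qp" "1 \<in> Qp"
    using of_rat_in_Qp[of 0] of_rat_in_Qp[of 1] by simp_all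
  then show ?thesis
    unfolding subfield_def is_subfield_def by (simp add: Qp_add Qp_mult Qp_uminus Qp_inverse)
qed

lemma alg_closure_Qp: "alg_closure Qp"
  by (intro alg_closure.intro subfield_Qp alg_closure_axioms.intro algebraic_over_Qp algebraically_closed)

sublocale alg_closure Qp
  by (rule alg_closure_Qp)

end

section \<open>Completeness of Qp and equivalence of norms\<close>

context Qp_bar
begin

definition av_tendsto :: "(nat \<Rightarrow> 'a) \<Rightarrow> 'a \<Rightarrow> bool" where
  "av_tendsto f x \<longleftrightarrow> (\<forall>e>0. eventually (\<lambda>n. av (f n - x) < e) sequentially)"

definition av_cauchy :: "(nat \<Rightarrow> 'a) \<Rightarrow> bool" where
  "av_cauchy f \<longleftrightarrow> (\<forall>e>0. \<exists>N. \<forall>m\<ge>N. \<forall>k\<ge>N. av (f m - f k) < e)"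

lemma eq_0_if_av_less: "(\<And>e. 0 < e \<Longrightarrow> av z < e) \<Longrightarrow> z = 0"
  using av_pos_iff by blast

lemma eventually_inverse_Suc_less: "0 < e \<Longrightarrow> eventually (\<lambda>n. inverse (real (Suc n)) < e) sequentially"
  by (rule order_tendstoD(2)[OF LIMSEQ_inverse_real_of_nat])

lemma av_tendsto_const: "av_tendsto (\<lambda>n. x) x"
  unfolding av_tendsto_def by simp

lemma av_tendsto_0I:
  assumes "\<And>n. av (f n) < inverse (real (Suc n))"
  shows "av_tendsto f 0"
  unfolding av_tendsto_def
proof (intro allI impI)
  fix e :: real assume "0 < e"
  show "eventually (\<lambda>n. av (f n - 0) < e) sequentially"
    using eventually_inverse_Suc_less[OF \<open>0 < e\<close>]
  proof (rule eventually_mono)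
    fix n assume "inverse (real (Suc n)) < e"
    then show "av (f n - 0) < e"
      unfolding diff_zero using assms[of n] by linarith
  qed
qed

lemma av_tendsto_unique:
  assumes "av_tendsto f x" "av_tendsto f y"
  shows "x = y"
proof -
  have "av (x - y) < e" if "0 < e" for e
  proof -
    have "eventually (\<lambda>n. av (f n - x) < e \<and> av (f n - y) < e) sequentially"
      using assms \<open>0 < e\<close> unfolding av_tendsto_def by (intro eventually_conj) auto
    then obtain n where "av (f n - x) < e" "av (f n - y) < e"
      unfolding eventually_sequentially by blast
    then show ?thesis
      using av_diff_less[of x "f n" e y] av_minus_commute[of x] by simp
  qed
  then show ?thesis
    using eq_0_if_av_less[of "x - y"] by simp
qed

lemma av_tendsto_cauchy:
  assumes "av_tendsto f x"
  shows "av_cauchy f"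
  unfolding av_cauchy_def
proof (intro allI impI)
  fix e :: real assume "0 < e"
  then obtain N where N: "\<forall>n\<ge>N. av (f n - x) < e"
    using assms unfolding av_tendsto_def eventually_sequentially by blast
  have "av (f m - f k) < e" if "m \<ge> N" "k \<ge> N" for m k
    using N av_diff_less[of "f m" x e "f k"] av_minus_commute[of x "f k"] that by simp
  then show "\<exists>N. \<forall>m\<ge>N. \<forall>k\<ge>N. av (f m - f k) < e"
    by blast
qed

lemma av_tendsto_lincomb:
  assumes "finite I" and B: "\<And>i. i \<in> I \<Longrightarrow> av_tendsto (\<lambda>n. B n i) (\<beta> i)"
  shows "av_tendsto (\<lambda>n. \<Sum>i\<in>I. B n i * v i) (\<Sum>i\<in>I. \<beta> i * v i)"
  unfolding av_tendsto_def
proof (intro allI impI)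
  fix e :: real assume "0 < e"
  define V where "V = 1 + (\<Sum>i\<in>I. av (v i))"
  have V_pos: "0 < V"
    unfolding V_def using sum_nonneg[of I "\<lambda>i. av (v i)"] av_nonneg by (simp add: add_pos_nonneg)
  have V: "av (v i) \<le> V" if "i \<in> I" for i
    using member_le_sum[of i I "\<lambda>i. av (v i)"] av_nonneg assms(1) that unfolding V_def by simp
  have "0 < e / V"
    using V_pos \<open>0 < e\<close> by simp
  then have "\<forall>i\<in>I. eventually (\<lambda>n. av (B n i - \<beta> i) < e / V) sequentially"
    using B unfolding av_tendsto_def by simp
  then have "eventually (\<lambda>n. \<forall>i\<in>I. av (B n i - \<beta> i) < e / V) sequentially"
    by (rule eventually_ball_finite[OF assms(1)])
  then show "eventually (\<lambda>n. av ((\<Sum>i\<in>I. B n i * v i) - (\<Sum>i\<in>I. \<beta> i * v i)) < e) sequentially"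
  proof (rule eventually_mono)
    fix n assume n: "\<forall>i\<in>I. av (B n i - \<beta> i) < e / V"
    have "av ((B n i - \<beta> i) * v i) < e" if "i \<in> I" for i
    proof -
      have "av ((B n i - \<beta> i) * v i) \<le> av (B n i - \<beta> i) * V"
        using V[OF that] av_nonneg unfolding av_mult by (intro mult_left_mono)
      also have "\<dots> < e / V * V"
        using n V_pos that by (intro mult_strict_right_mono) auto
      finally show ?thesis
        using V_pos by simp
    qed
    then have "av (\<Sum>i\<in>I. (B n i - \<beta> i) * v i) < e"
      by (rule av_sum_less[OF assms(1) _ \<open>0 < e\<close>])
    then show "av ((\<Sum>i\<in>I. B n i * v i) - (\<Sum>i\<in>I. \<beta> i * v i)) < e"
      by (simp add: sum_subtractf left_diff_distrib)
  qed
qed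

lemma av_cauchy_if_close:
  assumes "av_cauchy f" and close: "\<And>e. 0 < e \<Longrightarrow> eventually (\<lambda>n. av (f n - h n) < e) sequentially"
  shows "av_cauchy h"
  unfolding av_cauchy_def
proof (intro allI impI)
  fix e :: real assume "0 < e"
  obtain N1 where N1: "\<And>n. n \<ge> N1 \<Longrightarrow> av (f n - h n) < e"
    using close[OF \<open>0 < e\<close>] unfolding eventually_sequentially by blast
  obtain N2 where N2: "\<And>m k. m \<ge> N2 \<Longrightarrow> k \<ge> N2 \<Longrightarrow> av (f m - f k) < e"
    using \<open>av_cauchy f\<close> \<open>0 < e\<close> unfolding av_cauchy_def by blast
  have "av (h m - h k) < e" if "m \<ge> max N1 N2" "k \<ge> max N1 N2" for m k
  proof -
    have "av (h m - f m) < e" "av (f m - f k) < e" "av (f k - h k) < e"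
      using N1[of m] N1[of k] N2[of m k] that av_minus_commute[of "h m"] by simp_all
    then show ?thesis
      using av_diff_less[OF av_diff_less] by blast
  qed
  then show "\<exists>N. \<forall>m\<ge>N. \<forall>k\<ge>N. av (h m - h k) < e"
    by blast
qed

lemma Qp_complete:
  assumes f: "\<And>n. f n \<in> Qp" and "av_cauchy f"
  obtains x where "x \<in> Qp" "av_tendsto f x"
proof -
  have "\<exists>g. \<forall>n. av (f n - of_rat (g n)) < inverse (real (Suc n))"
    by (rule choice) (use f in \<open>simp add: Qp_iff\<close>)
  then obtain g where g: "\<And>n. av (f n - of_rat (g n)) < inverse (real (Suc n))"
    by blast
  have close: "eventually (\<lambda>n. av (f n - of_rat (g n)) < e) sequentially" if "0 < e" for e
    using eventually_inverse_Suc_less[OF that]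
  proof (rule eventually_mono)
    fix n assume "inverse (real (Suc n)) < e"
    then show "av (f n - of_rat (g n)) < e"
      using g[of n] by linarith
  qed
  have "av_cauchy (\<lambda>n. of_rat (g n))"
    using av_cauchy_if_close[OF \<open>av_cauchy f\<close> close] .
  then obtain x where x: "\<forall>e>0. \<exists>N. \<forall>m\<ge>N. av (of_rat (g m) - x) < e"
    using av_cauchy_rat_converges unfolding av_cauchy_def by blast
  have "av_tendsto f x"
    unfolding av_tendsto_def
  proof (intro allI impI)
    fix e :: real assume "0 < e"
    then have "eventually (\<lambda>n. av (of_rat (g n) - x) < e) sequentially"
      using x unfolding eventually_sequentially by blast
    with close[OF \<open>0 < e\<close>] show "eventually (\<lambda>n. av (f n - x) < e) sequentially"
      by (rule eventually_elim2) (rule av_diff_less)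
  qed
  moreover have "x \<in> Qp"
    unfolding Qp_iff
  proof (intro allI impI)
    fix e :: real assume "0 < e"
    then obtain N where "av (of_rat (g N) - x) < e"
      using x by blast
    then show "\<exists>q. av (x - of_rat q) < e"
      using av_minus_commute[of x] by auto
  qed
  ultimately show ?thesis
    using that by blast
qed

end

context Qp_bar
begin

text \<open>The heart of the equivalence of norms on finite-dimensional spaces over the complete field
  Qp: if the coefficients off j are controlled by the combination, a null sequence of
  combinations with j-th coefficient 1 would have coefficients converging in Qp to a nontrivial
  vanishing combination.\<close>
lemma lin_indep_not_tendsto_0:
  assumes fin: "finite I" and j: "j \<in> I" and indep: "lin_indep_over Qp I v"
    and c': "0 < c'" "\<forall>a. (\<forall>i\<in>I - {j}. a i \<in> Qp) \<longrightarrow>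
      (\<forall>i\<in>I - {j}. c' * av (a i) \<le> av (\<Sum>i\<in>I - {j}. a i * v i))"
    and B: "\<And>n i. i \<in> I \<Longrightarrow> B n i \<in> Qp" "\<And>n. B n j = 1"
  shows "\<not> av_tendsto (\<lambda>n. \<Sum>i\<in>I. B n i * v i) 0"
proof
  let ?S = "\<lambda>n. \<Sum>i\<in>I. B n i * v i" and ?J = "I - {j}"
  assume S0: "av_tendsto ?S 0"
  have S_diff: "?S m - ?S k = (\<Sum>i\<in>?J. (B m i - B k i) * v i)" for m k
    using fin j B(2) by (simp add: sum.remove sum_subtractf left_diff_distrib)
  have "av_cauchy (\<lambda>n. B n i)" if i: "i \<in> ?J" for i
    unfolding av_cauchy_def
  proof (intro allI impI)
    fix e :: real assume "0 < e"
    then have "0 < c' * e"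
      using c'(1) by simp
    then obtain N where N: "\<forall>m\<ge>N. \<forall>k\<ge>N. av (?S m - ?S k) < c' * e"
      using av_tendsto_cauchy[OF S0] unfolding av_cauchy_def by blast
    have "av (B m i - B k i) < e" if "m \<ge> N" "k \<ge> N" for m k
    proof -
      have "\<forall>l\<in>?J. B m l - B k l \<in> Qp"
        using B(1) by (simp add: diff_mem)
      then have "c' * av (B m i - B k i) \<le> av (?S m - ?S k)"
        using c'(2)[rule_format, of "\<lambda>l. B m l - B k l"] i unfolding S_diff by blast
      also have "\<dots> < c' * e"
        using N that by blast
      finally show ?thesis
        using c'(1) by simp
    qed
    then show "\<exists>N. \<forall>m\<ge>N. \<forall>k\<ge>N. av (B m i - B k i) < e"
      by blast
  qed
  then have "\<forall>i\<in>?J. \<exists>x. x \<in> Qp \<and> av_tendsto (\<lambda>n. B n i) x"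
    using Qp_complete B(1) by (metis DiffD1)
  then obtain \<beta> where \<beta>: "\<And>i. i \<in> ?J \<Longrightarrow> \<beta> i \<in> Qp" "\<And>i. i \<in> ?J \<Longrightarrow> av_tendsto (\<lambda>n. B n i) (\<beta> i)"
    by metis
  define \<beta>' where "\<beta>' = \<beta>(j := 1)"
  have "av_tendsto (\<lambda>n. B n i) (\<beta>' i)" if "i \<in> I" for i
    using \<beta>(2) B(2) av_tendsto_const that by (cases "i = j") (simp_all add: \<beta>'_def)
  then have "av_tendsto ?S (\<Sum>i\<in>I. \<beta>' i * v i)"
    by (rule av_tendsto_lincomb[OF fin])
  then have "(\<Sum>i\<in>I. \<beta>' i * v i) = 0"
    using av_tendsto_unique S0 by blast
  moreover have "\<forall>i\<in>I. \<beta>' i \<in> Qp"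
    using \<beta>(1) by (simp add: \<beta>'_def)
  ultimately have "\<beta>' j = 0"
    using indep j unfolding lin_indep_over_def by blast
  then show False
    by (simp add: \<beta>'_def)
qed

lemma lin_indep_coeff_bound_at:
  assumes fin: "finite I" and j: "j \<in> I" and indep: "lin_indep_over Qp I v"
    and c': "0 < c'" "\<forall>a. (\<forall>i\<in>I - {j}. a i \<in> Qp) \<longrightarrow>
      (\<forall>i\<in>I - {j}. c' * av (a i) \<le> av (\<Sum>i\<in>I - {j}. a i * v i))"
  shows "\<exists>c>0. \<forall>a. (\<forall>i\<in>I. a i \<in> Qp) \<longrightarrow> c * av (a j) \<le> av (\<Sum>i\<in>I. a i * v i)"
proof (rule ccontr)
  assume "\<not> ?thesis"
  then have "\<exists>a. (\<forall>i\<in>I. a i \<in> Qp) \<and> av (\<Sum>i\<in>I. a i * v i) < inverse (real (Suc n)) * av (a j)" for n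
    using positive_imp_inverse_positive[of "real (Suc n)"] by (auto simp: not_le)
  then obtain A where A: "\<And>n. \<forall>i\<in>I. A n i \<in> Qp"
    "\<And>n. av (\<Sum>i\<in>I. A n i * v i) < inverse (real (Suc n)) * av (A n j)"
    by metis
  have Aj: "A n j \<noteq> 0" for n
    using A(2)[of n] av_nonneg[of "\<Sum>i\<in>I. A n i * v i"] by auto
  define B where "B n i = A n i / A n j" for n i
  have "av (\<Sum>i\<in>I. B n i * v i) < inverse (real (Suc n))" for n
  proof -
    have "av (\<Sum>i\<in>I. B n i * v i) = av (\<Sum>i\<in>I. A n i * v i) / av (A n j)"
      by (simp add: B_def sum_divide_distrib[symmetric] av_divide)
    then show ?thesis
      using A(2)[of n] Aj[of n] by (simp add: divide_less_eq av_pos_iff)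
  qed
  then have "av_tendsto (\<lambda>n. \<Sum>i\<in>I. B n i * v i) 0"
    by (rule av_tendsto_0I)
  moreover have "B n i \<in> Qp" "B n j = 1" if "i \<in> I" for n i
    using A(1) Aj j that unfolding B_def by (simp_all add: divide_mem)
  ultimately show False
    using lin_indep_not_tendsto_0[OF fin j indep c'] j by blast
qed

lemma lin_indep_coeff_bound:
  assumes "finite I" "lin_indep_over Qp I v"
  shows "\<exists>c>0. \<forall>a. (\<forall>i\<in>I. a i \<in> Qp) \<longrightarrow> (\<forall>i\<in>I. c * av (a i) \<le> av (\<Sum>i\<in>I. a i * v i))"
  using assms
proof (induction "card I" arbitrary: I rule: less_induct)
  case less
  have "\<forall>j\<in>I. \<exists>c>0. \<forall>a. (\<forall>i\<in>I. a i \<in> Qp) \<longrightarrow> c * av (a j) \<le> av (\<Sum>i\<in>I. a i * v i)"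
  proof
    fix j assume j: "j \<in> I"
    have "card (I - {j}) < card I"
      by (rule card_Diff1_less[OF less.prems(1) j])
    moreover have "finite (I - {j})"
      using less.prems(1) by simp
    moreover have "lin_indep_over Qp (I - {j}) v"
      by (rule lin_indep_over_subset[OF less.prems(1) _ less.prems(2)]) blast
    ultimately have "\<exists>c'>0. \<forall>a. (\<forall>i\<in>I - {j}. a i \<in> Qp) \<longrightarrow>
        (\<forall>i\<in>I - {j}. c' * av (a i) \<le> av (\<Sum>i\<in>I - {j}. a i * v i))"
      by (rule less.hyps)
    then show "\<exists>c>0. \<forall>a. (\<forall>i\<in>I. a i \<in> Qp) \<longrightarrow> c * av (a j) \<le> av (\<Sum>i\<in>I. a i * v i)"
      using lin_indep_coeff_bound_at[OF less.prems(1) j less.prems(2)] by blast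
  qed
  then obtain c where c: "\<forall>j\<in>I. 0 < c j \<and>
      (\<forall>a. (\<forall>i\<in>I. a i \<in> Qp) \<longrightarrow> c j * av (a j) \<le> av (\<Sum>i\<in>I. a i * v i))"
    by (subst (asm) bchoice_iff) blast
  define c0 where "c0 = Min (insert 1 (c ` I))"
  have "0 < c0"
    using less.prems(1) c by (simp add: c0_def)
  moreover have "c0 * av (a j) \<le> av (\<Sum>i\<in>I. a i * v i)" if "j \<in> I" "\<forall>i\<in>I. a i \<in> Qp" for j a
  proof -
    have "c0 \<le> c j"
      using less.prems(1) that(1) by (simp add: c0_def)
    then have "c0 * av (a j) \<le> c j * av (a j)"
      using av_nonneg by (intro mult_right_mono)
    then show ?thesis
      using c that by force
  qed
  ultimately show ?case
    by blast
qed

end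

section \<open>Embeddings over Qp are isometries\<close>

lemma le_if_powers_bounded:
  fixes a b C :: real
  assumes "0 \<le> a" "0 \<le> b" and bound: "\<And>n. a ^ n \<le> C * b ^ n"
  shows "a \<le> b"
proof (rule ccontr)
  assume "\<not> a \<le> b"
  show False
  proof (cases "b = 0")
    case True
    then show False
      using bound[of 1] \<open>\<not> a \<le> b\<close> by simp
  next
    case False
    then have "0 < b" "1 < a / b"
      using assms(2) \<open>\<not> a \<le> b\<close> by auto
    then obtain n where "C < (a / b) ^ n"
      using real_arch_pow by blast
    moreover have "(a / b) ^ n \<le> C"
      using bound[of n] \<open>0 < b\<close> by (simp add: power_divide divide_le_eq)
    ultimately show False
      by simp
  qed
qed

context Qp_bar
begin

text \<open>Reduce X^n modulo the minimal polynomial: x^n and y^n are the same combination of the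
  powers below the degree, and the coefficients are bounded by |x^n| by the norm equivalence.\<close>
lemma av_conjugate_power_bound:
  assumes m: "is_min_poly Qp x m" and y: "poly m y = 0"
  obtains C where "\<And>n. av y ^ n \<le> C * av x ^ n"
proof -
  define d where "d = degree m"
  obtain c where c: "0 < c" "\<forall>a. (\<forall>i\<in>{..<d}. a i \<in> Qp) \<longrightarrow>
      (\<forall>i\<in>{..<d}. c * av (a i) \<le> av (\<Sum>i\<in>{..<d}. a i * x ^ i))"
    using lin_indep_coeff_bound[OF _ lin_indep_over_powers[OF m]] unfolding d_def by blast
  have mQp: "poly m x = 0"
    using m unfolding is_min_poly_def by auto
  define Y where "Y = max 1 (av y) ^ d"
  have Y: "av y ^ i \<le> Y" if "i < d" for i
  proof -
    have "av y ^ i \<le> max 1 (av y) ^ i"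
      using av_nonneg by (intro power_mono) auto
    also have "\<dots> \<le> Y"
      unfolding Y_def using that by (intro power_increasing) auto
    finally show ?thesis .
  qed
  have "av y ^ n \<le> Y / c * av x ^ n" for n
  proof -
    obtain r where r: "\<And>i. r i \<in> Qp" "\<And>z. poly m z = 0 \<Longrightarrow> z ^ n = (\<Sum>i<d. r i * z ^ i)"
      using power_eq_lower_powers[OF m] unfolding d_def by metis
    have r_bound: "av (r i) \<le> av x ^ n / c" if "i < d" for i
    proof -
      have "c * av (r i) \<le> av (x ^ n)"
        using c(2)[rule_format, of r] r that unfolding r(2)[OF mQp] by simp
      then show ?thesis
        using c(1) by (simp add: av_power field_simps)
    qed
    have "av (y ^ n) \<le> Y / c * av x ^ n"
      unfolding r(2)[OF y]
    proof (rule av_sum_le)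
      fix i assume "i \<in> {..<d}"
      then have "av (r i) * av y ^ i \<le> av x ^ n / c * Y"
        using r_bound Y av_nonneg c(1) by (intro mult_mono) auto
      then show "av (r i * y ^ i) \<le> Y / c * av x ^ n"
        by (simp add: av_mult av_power mult.commute)
    qed (use c(1) av_nonneg Y_def in simp)
    then show ?thesis
      by (simp add: av_power)
  qed
  then show ?thesis
    using that by blast
qed

lemma av_conjugate:
  assumes m: "is_min_poly Qp x m" and y: "poly m y = 0"
  shows "av y = av x"
proof -
  have "av y' \<le> av x'" if m': "is_min_poly Qp x' m" and y': "poly m y' = 0" for x' y'
  proof -
    obtain C where "\<And>n. av y' ^ n \<le> C * av x' ^ n"
      using av_conjugate_power_bound[OF m' y'] by blast
    then show ?thesis
      using le_if_powers_bounded av_nonneg by blast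
  qed
  moreover have "poly m x = 0"
    using m unfolding is_min_poly_def by simp
  ultimately show ?thesis
    using is_min_poly_root[OF m y algebraic] m y by (meson antisym)
qed

lemma av_embedding:
  assumes \<tau>: "embedding_over Qp M \<tau>" and w: "w \<in> M"
  shows "av (\<tau> w) = av w"
proof -
  obtain m where m: "is_min_poly Qp w m"
    using is_min_poly_exists[OF algebraic] .
  then have "poly m (\<tau> w) = 0"
    using embedding_over_root[OF \<tau> _ _ w] unfolding is_min_poly_def by blast
  then show ?thesis
    by (rule av_conjugate[OF m])
qed

lemma av_has_sum_embedding:
  assumes \<tau>: "embedding_over Qp M \<tau>" and g: "\<And>i. g i \<in> M" and s: "s \<in> M"
    and sum: "av_has_sum av g s"
  shows "av_has_sum av (\<lambda>i. \<tau> (g i)) (\<tau> s)"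
proof -
  interpret subfield_hom M \<tau>
    using \<tau> unfolding embedding_over_def by blast
  have "(\<Sum>i\<in>S. \<tau> (g i)) - \<tau> s = \<tau> (sum g S - s)" for S
    using g s by (simp add: hom_diff hom_sum sum_mem)
  then have "av ((\<Sum>i\<in>S. \<tau> (g i)) - \<tau> s) = av (sum g S - s)" for S
    using av_embedding[OF \<tau> diff_mem[OF sum_mem[of S g] s]] g by simp
  then show ?thesis
    using sum unfolding av_has_sum_def by simp
qed

lemma av_eval_embedding:
  assumes \<tau>: "embedding_over Qp M \<tau>" and "a \<in> M" "b \<in> M" "s \<in> M"
    and "av_eval av f (a, b) s"
  shows "av_eval av f (\<tau> a, \<tau> b) (\<tau> s)"
proof -
  interpret subfield_hom M \<tau>
    using \<tau> unfolding embedding_over_def by blast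
  have rat: "of_rat q \<in> M" "\<tau> (of_rat q) = of_rat q" for q
    using \<tau> of_rat_in_Qp unfolding embedding_over_def by blast+
  let ?g = "\<lambda>(i, j). of_rat (f (i, j)) * a ^ i * b ^ j"
  have g: "?g ij \<in> M" "\<tau> (?g ij) = (case ij of (i, j) \<Rightarrow> of_rat (f (i, j)) * \<tau> a ^ i * \<tau> b ^ j)" for ij
    using assms(2,3) rat by (auto simp: mult_mem power_mem hom_mult hom_power split: prod.split)
  show ?thesis
    using av_has_sum_embedding[OF \<tau> g(1) assms(4)] assms(5) unfolding av_eval_def g(2) by simp
qed

lemma LT_torsion_embedding:
  assumes \<tau>: "embedding_over Qp M \<tau>" and ab: "(a, b) \<in> LT_torsion av p h1 h2 n" "a \<in> M" "b \<in> M"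
  shows "(\<tau> a, \<tau> b) \<in> LT_torsion av p h1 h2 n"
proof -
  have "\<tau> 0 = 0"
    using \<tau> subfield_hom.hom_zero unfolding embedding_over_def by blast
  moreover have "0 \<in> M"
    using \<tau> subfield.zero_mem unfolding embedding_over_def subfield_hom_def by blast
  ultimately have "av_eval av f (\<tau> a, \<tau> b) 0" if "av_eval av f (a, b) 0" for f
    using av_eval_embedding[OF \<tau> ab(2,3), of 0 f] that by simp
  moreover have "av (\<tau> a) = av a" "av (\<tau> b) = av b"
    using av_embedding[OF \<tau>] ab(2,3) by simp_all
  ultimately show ?thesis
    using ab(1) unfolding LT_torsion_def by simp
qed

end

theorem theorem5p1:
  fixes av :: "'a::field_char_0 \<Rightarrow> real" and p h1 h2 n :: nat
  assumes "prime p" and "h1 > 0" and "h2 > 0" and "coprime h1 h2"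
    and "is_Qp_bar p av" and "n \<ge> 1"
  shows "galois_ext (Qp_in av)
           (field_gen (Qp_in av) ((fst ` LT_torsion av p h1 h2 n) \<union> (snd ` LT_torsion av p h1 h2 n)))"
proof -
  interpret Qp_bar p av
    by (rule Qp_bar.intro) (fact assms(5))
  show ?thesis
    by (rule galois_ext_field_gen_pairs[OF alg_closure_Qp]) (rule LT_torsion_embedding)
qed

end
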